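(* Let $n\ge1$. For every $f\in A_{\vec 0}(\mathbb{D}^n)$, every $\epsilon>0$ and every $\theta\in[0,2\pi)$, no non-zero positive measure in $A_{\vec 0}(\mathbb{D}^n)^\perp$ has support contained in $f^{-1}(H^\theta_\epsilon)=\{z\in\mathbb{T}^n: f(z)\in H^\theta_\epsilon\}$.
   Context: $A(\mathbb{D}^n)$ is the polydisc algebra (continuous on $\overline{\mathbb{D}}^n$, holomorphic on $\mathbb{D}^n$), regarded as a subspace of $C(\mathbb{T}^n)$; $A_{\vec 0}(\mathbb{D}^n)=\{z_1\cdots z_n g: g\in A(\mathbb{D}^n)\}$; $A_{\vec 0}(\mathbb{D}^n)^\perp$ is the set of complex Borel measures of bounded variation on $\mathbb{T}^n$ annihilating every function in $A_{\vec 0}(\mathbb{D}^n)$. $H^\theta_\epsilon=\{e^{i\theta}w: w\in\mathbb{C},\ \operatorname{Re}(w)\ge\epsilon\}$. *)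

theory Defs
  imports "HOL-Analysis.Analysis"
begin

text \<open>Points of C^n are vectors of type complex^'n (n = CARD('n) >= 1).\<close>

definition open_polydisc :: "(complex ^ 'n) set" where
  "open_polydisc = {z. \<forall>i. norm (z $ i) < 1}"

definition closed_polydisc :: "(complex ^ 'n) set" where
  "closed_polydisc = {z. \<forall>i. norm (z $ i) \<le> 1}"

definition torus :: "(complex ^ 'n) set" where
  "torus = {z. \<forall>i. norm (z $ i) = 1}"

definition holomorphic_on_n :: "(complex ^ 'n \<Rightarrow> complex) \<Rightarrow> (complex ^ 'n) set \<Rightarrow> bool" where
  "holomorphic_on_n f U \<longleftrightarrow>
     (\<forall>z\<in>U. \<exists>L. (f has_derivative L) (at z) \<and> (\<forall>c v. L (c *s v) = c * L v))"

definition polydisc_algebra :: "(complex ^ 'n \<Rightarrow> complex) set" where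
  "polydisc_algebra = {f. continuous_on closed_polydisc f \<and> holomorphic_on_n f open_polydisc}"

definition polydisc_algebra0 :: "(complex ^ 'n \<Rightarrow> complex) set" where
  "polydisc_algebra0 = {(\<lambda>z. (\<Prod>i\<in>UNIV. z $ i) * g z) | g. g \<in> polydisc_algebra}"

definition torus_measure :: "(complex ^ 'n) measure \<Rightarrow> bool" where
  "torus_measure M \<longleftrightarrow> space M = torus \<and> sets M = sets (restrict_space borel torus)"

definition annihilates :: "(complex ^ 'n) measure \<Rightarrow> (complex ^ 'n \<Rightarrow> complex) set \<Rightarrow> bool" where
  "annihilates M F \<longleftrightarrow> (\<forall>g\<in>F. integrable M g \<and> (\<integral>z. g z \<partial>M) = 0)"

definition msupport :: "(complex ^ 'n) measure \<Rightarrow> (complex ^ 'n) set" where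
  "msupport M = {z \<in> space M. \<forall>U. open U \<and> z \<in> U \<longrightarrow> emeasure M (U \<inter> space M) > 0}"

definition half_plane :: "real \<Rightarrow> real \<Rightarrow> complex set" where
  "half_plane \<theta> \<epsilon> = {exp (\<i> * of_real \<theta>) * w | w. Re w \<ge> \<epsilon>}"

end

theory Submission
  imports Defs
begin

text \<open>\<open>f\<close> itself lies in \<open>A\<^sub>0(\<bbbD>\<^sup>n)\<close>, so \<open>\<integral> f d\<mu> = 0\<close>. On the other hand \<open>\<mu>\<close>
  is concentrated on its support (the torus is second countable), where the rotated function
  \<open>e\<^sup>-\<^sup>i\<^sup>\<theta> f\<close> has real part at least \<open>\<epsilon>\<close>; hence \<open>0 = Re (e\<^sup>-\<^sup>i\<^sup>\<theta> \<integral> f d\<mu>) \<ge> \<epsilon> \<mu>(\<bbbT>\<^sup>n)\<close>.\<close>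

lemma AE_in_msupport:
  fixes M :: "(complex ^ 'n) measure"
  assumes open_measurable: "\<And>U. open U \<Longrightarrow> U \<inter> space M \<in> sets M"
  shows "AE z in M. z \<in> msupport M"
proof -
  define F where "F = {U :: (complex ^ 'n) set. open U \<and> emeasure M (U \<inter> space M) = 0}"
  obtain F' where F': "F' \<subseteq> F" "countable F'" "\<Union>F' = \<Union>F"
    using Lindelof[of F] unfolding F_def by auto
  have null: "(\<Union>U\<in>F'. U \<inter> space M) \<in> null_sets M"
    using F'(1,2) open_measurable unfolding F_def by (intro null_sets_UN') auto
  have "{z \<in> space M. z \<notin> msupport M} \<subseteq> (\<Union>U\<in>F'. U \<inter> space M)"
  proof
    fix z assume z: "z \<in> {z \<in> space M. z \<notin> msupport M}"
    then obtain U where "open U" "z \<in> U" "emeasure M (U \<inter> space M) = 0"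
      unfolding msupport_def by (auto simp: zero_less_iff_neq_zero)
    then have "z \<in> \<Union>F'" using F'(3) unfolding F_def by auto
    then show "z \<in> (\<Union>U\<in>F'. U \<inter> space M)" using z by auto
  qed
  then show ?thesis
    by (intro AE_I'[OF null]) auto
qed

lemma torus_measure_open_measurable:
  assumes "torus_measure M" and "open U"
  shows "U \<inter> space M \<in> sets M"
  using assms borel_open unfolding torus_measure_def by (auto simp: sets_restrict_space)

lemma half_plane_iff_rotated_Re:
  "w \<in> half_plane \<theta> \<epsilon> \<longleftrightarrow> \<epsilon> \<le> Re (exp (- \<i> * of_real \<theta>) * w)"
proof
  assume "w \<in> half_plane \<theta> \<epsilon>"
  then obtain v where v: "w = exp (\<i> * of_real \<theta>) * v" "\<epsilon> \<le> Re v"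
    unfolding half_plane_def by auto
  then have "exp (- \<i> * of_real \<theta>) * w = v"
    by (simp add: exp_minus mult.assoc[symmetric])
  then show "\<epsilon> \<le> Re (exp (- \<i> * of_real \<theta>) * w)"
    using v(2) by (simp only:)
next
  assume "\<epsilon> \<le> Re (exp (- \<i> * of_real \<theta>) * w)"
  moreover have "w = exp (\<i> * of_real \<theta>) * (exp (- \<i> * of_real \<theta>) * w)"
    by (simp add: exp_minus_inverse mult.assoc[symmetric])
  ultimately show "w \<in> half_plane \<theta> \<epsilon>"
    unfolding half_plane_def by blast
qed

lemma measure_space_le_Re_integral:
  fixes g :: "'a \<Rightarrow> complex"
  assumes "finite_measure M" and "integrable M g" and "AE z in M. \<epsilon> \<le> Re (g z)"
  shows "\<epsilon> * measure M (space M) \<le> Re (\<integral>z. g z \<partial>M)"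
proof -
  have "\<epsilon> * measure M (space M) = (\<integral>z. \<epsilon> \<partial>M)"
    by simp
  also have "\<dots> \<le> (\<integral>z. Re (g z) \<partial>M)"
    using assms by (intro integral_mono_AE finite_measure.integrable_const) auto
  also have "\<dots> = Re (\<integral>z. g z \<partial>M)"
    using assms(2) by (rule integral_Re)
  finally show ?thesis .
qed

theorem mainTheorem6:
  fixes f :: "complex ^ 'n \<Rightarrow> complex" and \<epsilon> \<theta> :: real
    and M :: "(complex ^ 'n) measure"
  assumes "f \<in> polydisc_algebra0"
    and "\<epsilon> > 0"
    and "0 \<le> \<theta>" and "\<theta> < 2 * pi"
    and "torus_measure M" and "finite_measure M"
    and "annihilates M polydisc_algebra0"
    and "msupport M \<subseteq> {z \<in> torus. f z \<in> half_plane \<theta> \<epsilon>}"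
  shows "emeasure M (space M) = 0"
proof -
  define c where "c = exp (- \<i> * of_real \<theta>)"
  have f_int: "integrable M f" and f_zero: "(\<integral>z. f z \<partial>M) = 0"
    using assms(1,7) unfolding annihilates_def by auto
  have "AE z in M. z \<in> msupport M"
    using torus_measure_open_measurable[OF assms(5)] by (rule AE_in_msupport)
  then have "AE z in M. \<epsilon> \<le> Re (c * f z)"
    using assms(8) unfolding c_def half_plane_iff_rotated_Re by auto
  then have "\<epsilon> * measure M (space M) \<le> Re (\<integral>z. c * f z \<partial>M)"
    using assms(6) f_int by (intro measure_space_le_Re_integral) auto
  also have "\<dots> = 0"
    using f_zero by simp
  finally have "measure M (space M) = 0"
    using assms(2) by (simp add: mult_le_0_iff measure_nonneg order.antisym)
  then show ?thesis
    using assms(6) by (simp add: finite_measure.emeasure_eq_measure)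
qed

end
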